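(* Let $n\ge 2$ and $0\le r_u<1$. For all $x,y\in\mathbb{B}^n$ such that $0\le |x|\le |y|\le r_u$, $$\frac12\,\mathrm{th}\frac{\rho_{\mathbb{B}^n}(x,y)}{2}\le t_{\mathbb{B}^n}(x,y)\le \frac{1+r_u}{2}\,\mathrm{th}\frac{\rho_{\mathbb{B}^n}(x,y)}{2},$$ and the constant $(1+r_u)/2$ in the upper bound is the best possible constant depending only on $r_u$.
   Context: $\mathbb{B}^n=\{x\in\mathbb{R}^n:|x|<1\}$ is the unit ball. For a domain $G\subsetneq\mathbb{R}^n$ and $x\in G$, $d_G(x)=\inf\{|x-z|:z\in\partial G\}$. The hyperbolic metric of the unit ball is given by $\mathrm{sh}^2\frac{\rho_{\mathbb{B}^n}(x,y)}{2}=\frac{|x-y|^2}{(1-|x|^2)(1-|y|^2)}$; equivalently $\mathrm{th}\frac{\rho_{\mathbb{B}^n}(x,y)}{2}=\frac{|x-y|}{\sqrt{|x-y|^2+(1-|x|^2)(1-|y|^2)}}$. The $t$-metric of a domain $G$ is $t_G(x,y)=\frac{|x-y|}{|x-y|+d_G(x)+d_G(y)}$. *)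

theory Defs
  imports "HOL-Analysis.Analysis"
begin

definition dG :: "'a::euclidean_space set \<Rightarrow> 'a \<Rightarrow> real" where
  "dG G x = infdist x (frontier G)"

definition tmetric :: "'a::euclidean_space set \<Rightarrow> 'a \<Rightarrow> 'a \<Rightarrow> real" where
  "tmetric G x y = dist x y / (dist x y + dG G x + dG G y)"

text \<open>Hyperbolic metric of the unit ball: sh^2(rho/2) = |x-y|^2/((1-|x|^2)(1-|y|^2)).\<close>
definition rho_ball :: "'a::euclidean_space \<Rightarrow> 'a \<Rightarrow> real" where
  "rho_ball x y = 2 * arsinh (dist x y / sqrt ((1 - (norm x)\<^sup>2) * (1 - (norm y)\<^sup>2)))"

end

theory Submission
  imports Defs
begin

text \<open>With \<open>a = |x| \<le> b = |y|\<close> and \<open>d = |x - y|\<close> both quantities are explicit: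
  \<open>t = d / (d + 2 - a - b)\<close> and \<open>th (\<rho>/2) = d / \<surd>(d\<^sup>2 + (1 - a\<^sup>2)(1 - b\<^sup>2))\<close>.
  Both bounds then become polynomial inequalities in \<open>a, b, d\<close> on the range
  \<open>b - a \<le> d \<le> a + b\<close> allowed by the triangle inequality.
  For sharpness take \<open>x = s e\<close>, \<open>y = r e\<close> on a ray: there
  \<open>t / th (\<rho>/2) = (1 - r s) / (2 (1 - s))\<close>, which tends to \<open>(1 + r)/2\<close> as \<open>s \<rightarrow> r\<close>.
  None of this depends on the dimension.\<close>

lemma dG_ball_eq:
  fixes x :: "'a::euclidean_space"
  assumes "norm x < 1"
  shows "dG (ball 0 1) x = 1 - norm x"
proof -
  obtain u :: 'a where u: "norm u = 1" "x = norm x *\<^sub>R u"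
  proof (cases "x = 0")
    case True
    obtain u :: 'a where "norm u = 1" using vector_choose_size[of 1] by auto
    with True show ?thesis using that by simp
  next
    case False
    then show ?thesis using that[of "sgn x"] by (simp add: norm_sgn sgn_div_norm)
  qed
  have "x - u = (norm x - 1) *\<^sub>R u"
    by (subst u(2)) (simp add: algebra_simps)
  then have "dist x u = 1 - norm x"
    using assms by (simp add: dist_norm u(1))
  then have "infdist x (sphere 0 1) \<le> 1 - norm x"
    using u(1) by (intro infdist_le2[of u]) auto
  moreover have "1 - norm x \<le> infdist x (sphere 0 1)"
  proof -
    have "1 - norm x \<le> dist x z" if "z \<in> sphere 0 1" for z
      using that norm_triangle_ineq2[of z x] by (simp add: dist_norm norm_minus_commute)
    then show ?thesis
      by (simp add: infdist_notempty) (rule cINF_greatest; simp)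
  qed
  ultimately show ?thesis by (simp add: dG_def)
qed

lemma tmetric_ball_eq:
  fixes x y :: "'a::euclidean_space"
  assumes "norm x < 1" "norm y < 1"
  shows "tmetric (ball 0 1) x y = dist x y / (dist x y + (2 - norm x - norm y))"
  using assms by (simp add: tmetric_def dG_ball_eq)

lemma tanh_half_rho_ball_eq:
  fixes x y :: "'a::euclidean_space"
  assumes "norm x < 1" "norm y < 1"
  shows "tanh (rho_ball x y / 2)
           = dist x y / sqrt ((dist x y)\<^sup>2 + (1 - (norm x)\<^sup>2) * (1 - (norm y)\<^sup>2))"
proof -
  define d where "d = dist x y"
  define Q where "Q = (1 - (norm x)\<^sup>2) * (1 - (norm y)\<^sup>2)"
  have "0 < Q"
    using assms by (simp add: Q_def abs_square_less_1)
  have "tanh (rho_ball x y / 2) = (d / sqrt Q) / sqrt ((d / sqrt Q)\<^sup>2 + 1)"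
    by (simp add: rho_ball_def d_def Q_def tanh_def cosh_arsinh_real)
  also have "\<dots> = d / sqrt (d\<^sup>2 + Q)"
    using \<open>0 < Q\<close> by (simp add: power_divide field_simps real_sqrt_divide)
  finally show ?thesis by (simp add: d_def Q_def)
qed

text \<open>The certificate below comes from bounding \<open>3 u\<^sup>2\<close>, with \<open>u = d - (b - a) \<in> [0, 2a]\<close>,
  from below by its tangent at \<open>u = 2 a (1 - b)\<close>; the remaining linear function of \<open>u\<close>
  is nonnegative at both endpoints.\<close>
lemma add_two_minus_le_two_sqrt:
  fixes a b d :: real
  assumes "0 \<le> a" "a \<le> b" "b \<le> 1" "b - a \<le> d" "d \<le> a + b"
  shows "d + (2 - a - b) \<le> 2 * sqrt (d\<^sup>2 + (1 - a\<^sup>2) * (1 - b\<^sup>2))"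
proof -
  have certificate: "4 * (d\<^sup>2 + (1 - a\<^sup>2) * (1 - b\<^sup>2)) - (d + (2 - a - b))\<^sup>2
      = 3 * (d - (b - a) - 2 * a * (1 - b))\<^sup>2 + 4 * (a + b - d) * (1 - b) * (1 - 2 * a + a * b)
        + 4 * (d - (b - a)) * b * (1 - a * b)"
    by (simp add: algebra_simps power2_eq_square)
  have "a * a \<le> a * b" "a * b \<le> 1"
    using assms by (auto intro: mult_left_mono mult_le_one)
  then have "0 \<le> 1 - 2 * a + a * b"
    using zero_le_power2[of "1 - a"] by (simp add: power2_eq_square algebra_simps)
  then have "0 \<le> 4 * (a + b - d) * (1 - b) * (1 - 2 * a + a * b)"
    using assms by simp
  moreover have "0 \<le> 4 * (d - (b - a)) * b * (1 - a * b)"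
    using assms \<open>a * b \<le> 1\<close> by simp
  ultimately have "(d + (2 - a - b))\<^sup>2 \<le> 4 * (d\<^sup>2 + (1 - a\<^sup>2) * (1 - b\<^sup>2))"
    using certificate zero_le_power2[of "d - (b - a) - 2 * a * (1 - b)"] by linarith
  then have "((d + (2 - a - b)) / 2)\<^sup>2 \<le> d\<^sup>2 + (1 - a\<^sup>2) * (1 - b\<^sup>2)"
    by (simp add: power_divide)
  then show ?thesis
    using real_le_rsqrt by fastforce
qed

text \<open>The difference of the squared sides is a concave quadratic in \<open>d\<close>, so it is bounded
  below by its linear interpolation between the endpoints \<open>d = b - a\<close> and \<open>d = a + b\<close>.\<close>
lemma two_sqrt_le_mult_add_two_minus:
  fixes a b d :: real
  assumes "0 \<le> a" "a \<le> b" "b \<le> 1" "b - a \<le> d" "d \<le> a + b"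
  shows "2 * sqrt (d\<^sup>2 + (1 - a\<^sup>2) * (1 - b\<^sup>2)) \<le> (1 + b) * (d + (2 - a - b))"
proof -
  define F where "F = (1 + b)\<^sup>2 * (d + (2 - a - b))\<^sup>2 - 4 * (d\<^sup>2 + (1 - a\<^sup>2) * (1 - b\<^sup>2))"
  have interpolation: "2 * a * F = (d - (b - a)) * (4 * ((1 + b)\<^sup>2 - (1 + a * b)\<^sup>2))
      + (a + b - d) * (4 * (b - a) * (2 + b - a - 2 * a * b))
      + 2 * a * (4 - (1 + b)\<^sup>2) * (d - (b - a)) * (a + b - d)"
    unfolding F_def by (simp add: algebra_simps power2_eq_square)
  have "1 + a * b \<le> 1 + b" "a * b \<le> 1" "1 + b \<le> 2"
    using assms by (auto intro: mult_left_le_one_le mult_le_one)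
  then have "(1 + a * b)\<^sup>2 \<le> (1 + b)\<^sup>2" "(1 + b)\<^sup>2 \<le> 4"
    using assms power_mono[of "1 + b" 2 2] by (auto intro: power_mono)
  then have "0 \<le> 2 * a * F"
    unfolding interpolation using assms \<open>a * b \<le> 1\<close>
    by (intro add_nonneg_nonneg mult_nonneg_nonneg) auto
  moreover have "0 \<le> F" if "a = 0"
    using that assms by (simp add: F_def algebra_simps power2_eq_square)
  ultimately have "0 \<le> F"
    using assms by (cases "a = 0") (auto simp: zero_le_mult_iff)
  then have "d\<^sup>2 + (1 - a\<^sup>2) * (1 - b\<^sup>2) \<le> ((1 + b) * (d + (2 - a - b)) / 2)\<^sup>2"
    by (simp add: F_def power_divide power_mult_distrib)
  then have "sqrt (d\<^sup>2 + (1 - a\<^sup>2) * (1 - b\<^sup>2)) \<le> (1 + b) * (d + (2 - a - b)) / 2"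
    using assms by (intro real_le_lsqrt) auto
  then show ?thesis by simp
qed

lemma tmetric_ball_tanh_bounds:
  fixes x y :: "'a::euclidean_space"
  assumes "norm x \<le> norm y" "norm y \<le> r" "r < 1"
  shows "(1/2) * tanh (rho_ball x y / 2) \<le> tmetric (ball 0 1) x y"
    and "tmetric (ball 0 1) x y \<le> ((1 + r) / 2) * tanh (rho_ball x y / 2)"
proof -
  define a b d where "a = norm x" "b = norm y" "d = dist x y"
  define R where "R = sqrt (d\<^sup>2 + (1 - a\<^sup>2) * (1 - b\<^sup>2))"
  have range: "0 \<le> a" "a \<le> b" "b \<le> 1" "b - a \<le> d" "d \<le> a + b"
    using assms norm_triangle_ineq2[of y x] norm_triangle_ineq4[of x y]
    by (auto simp: a_b_d_def dist_norm norm_minus_commute)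
  have "0 < (1 - a\<^sup>2) * (1 - b\<^sup>2)"
    using assms by (simp add: a_b_d_def abs_square_less_1)
  then have "0 < R"
    unfolding R_def by (intro real_sqrt_gt_zero add_nonneg_pos) auto
  have "0 < d + (2 - a - b)" "0 \<le> d"
    using assms range by (auto simp: a_b_d_def)
  have t: "tmetric (ball 0 1) x y = d / (d + (2 - a - b))"
    and th: "tanh (rho_ball x y / 2) = d / R"
    using assms by (simp_all add: tmetric_ball_eq tanh_half_rho_ball_eq a_b_d_def R_def)
  have "d / (2 * R) \<le> d / (d + (2 - a - b))"
    using add_two_minus_le_two_sqrt[OF range, folded R_def] \<open>0 < R\<close> \<open>0 < d + (2 - a - b)\<close> \<open>0 \<le> d\<close>
    by (intro divide_left_mono) auto
  then show "(1/2) * tanh (rho_ball x y / 2) \<le> tmetric (ball 0 1) x y"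
    by (simp add: t th)
  have "d * (2 * R) \<le> d * ((1 + b) * (d + (2 - a - b)))"
    using two_sqrt_le_mult_add_two_minus[OF range, folded R_def] \<open>0 \<le> d\<close>
    by (rule mult_left_mono)
  then have "d / (d + (2 - a - b)) \<le> (1 + b) * d / (2 * R)"
    using \<open>0 < R\<close> \<open>0 < d + (2 - a - b)\<close> by (simp add: divide_simps algebra_simps)
  also have "\<dots> \<le> (1 + r) * d / (2 * R)"
    using assms \<open>0 < R\<close> \<open>0 \<le> d\<close> by (intro divide_right_mono mult_right_mono) (auto simp: a_b_d_def)
  finally show "tmetric (ball 0 1) x y \<le> ((1 + r) / 2) * tanh (rho_ball x y / 2)"
    by (simp add: t th)
qed

lemma tmetric_ball_ray:
  fixes e :: "'a::euclidean_space"
  assumes "norm e = 1" "0 \<le> s" "s \<le> r" "r < 1"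
  shows "tmetric (ball 0 1) (s *\<^sub>R e) (r *\<^sub>R e) = (r - s) / (2 * (1 - s))"
proof -
  have "dist (s *\<^sub>R e) (r *\<^sub>R e) = r - s"
    using assms by (simp add: dist_norm flip: scaleR_diff_left)
  then show ?thesis
    using assms by (simp add: tmetric_ball_eq algebra_simps)
qed

lemma tanh_half_rho_ball_ray:
  fixes e :: "'a::euclidean_space"
  assumes "norm e = 1" "0 \<le> s" "s \<le> r" "r < 1"
  shows "tanh (rho_ball (s *\<^sub>R e) (r *\<^sub>R e) / 2) = (r - s) / (1 - r * s)"
proof -
  have "dist (s *\<^sub>R e) (r *\<^sub>R e) = r - s"
    using assms by (simp add: dist_norm flip: scaleR_diff_left)
  moreover have "(r - s)\<^sup>2 + (1 - s\<^sup>2) * (1 - r\<^sup>2) = (1 - r * s)\<^sup>2"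
    by (simp add: algebra_simps power2_eq_square)
  moreover have "0 \<le> 1 - r * s"
    using assms mult_mono[of r 1 s 1] by simp
  ultimately show ?thesis
    using assms by (simp add: tanh_half_rho_ball_eq)
qed

lemma tmetric_ball_tanh_bound_optimal:
  fixes e :: "'a::euclidean_space"
  assumes "norm e = 1" "0 < r" "r < 1"
    and bound: "\<And>s. 0 \<le> s \<Longrightarrow> s < r \<Longrightarrow>
      tmetric (ball 0 1) (s *\<^sub>R e) (r *\<^sub>R e) \<le> c * tanh (rho_ball (s *\<^sub>R e) (r *\<^sub>R e) / 2)"
  shows "(1 + r) / 2 \<le> c"
proof -
  have "1 - r * s \<le> 2 * c * (1 - s)" if "s \<in> {0<..<r}" for s
  proof -
    have "0 < 1 - r * s"
      using that assms mult_strict_mono[of r 1 s 1] by simp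
    have "(r - s) / (2 * (1 - s)) \<le> c * ((r - s) / (1 - r * s))"
      using bound[of s] that assms by (simp add: tmetric_ball_ray tanh_half_rho_ball_ray)
    then have "(r - s) * (1 - r * s) \<le> (r - s) * (2 * c * (1 - s))"
      using that assms \<open>0 < 1 - r * s\<close> by (simp add: divide_simps algebra_simps)
    then show ?thesis
      using that by simp
  qed
  then have "\<forall>\<^sub>F s in at_left r. 1 - r * s \<le> 2 * c * (1 - s)"
    by (rule eventually_mono[OF eventually_at_left_real[OF \<open>0 < r\<close>]])
  then have "1 - r * r \<le> 2 * c * (1 - r)"
    by (rule tendsto_le[rotated 3]) (auto intro!: tendsto_eq_intros)
  then have "(1 - r) * (1 + r) \<le> (1 - r) * (2 * c)"
    by (simp add: algebra_simps)
  then show ?thesis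
    using assms by simp
qed

theorem theorem3p2:
  fixes ru :: real
  assumes n2: "CARD('n::finite) \<ge> 2"
    and ru: "0 \<le> ru" "ru < 1"
  shows "(\<forall>x y :: real^'n. norm x \<le> norm y \<and> norm y \<le> ru \<longrightarrow>
            (1/2) * tanh (rho_ball x y / 2) \<le> tmetric (ball 0 1) x y \<and>
            tmetric (ball 0 1) x y \<le> ((1 + ru) / 2) * tanh (rho_ball x y / 2))
       \<and> (0 < ru \<longrightarrow>
            (\<forall>c. (\<forall>x y :: real^'n. norm x \<le> norm y \<and> norm y \<le> ru \<longrightarrow>
                    tmetric (ball 0 1) x y \<le> c * tanh (rho_ball x y / 2))
                 \<longrightarrow> (1 + ru) / 2 \<le> c))"
proof (intro conjI allI impI)
  fix x y :: "real^'n"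
  assume "norm x \<le> norm y \<and> norm y \<le> ru"
  then show "(1/2) * tanh (rho_ball x y / 2) \<le> tmetric (ball 0 1) x y"
    and "tmetric (ball 0 1) x y \<le> ((1 + ru) / 2) * tanh (rho_ball x y / 2)"
    using tmetric_ball_tanh_bounds[of x y ru] ru by auto
next
  fix c :: real
  assume "0 < ru" and hc: "\<forall>x y :: real^'n. norm x \<le> norm y \<and> norm y \<le> ru \<longrightarrow>
    tmetric (ball 0 1) x y \<le> c * tanh (rho_ball x y / 2)"
  obtain e :: "real^'n" where e: "norm e = 1"
    using vector_choose_size[of 1] by auto
  show "(1 + ru) / 2 \<le> c"
    using e \<open>0 < ru\<close> ru(2) by (rule tmetric_ball_tanh_bound_optimal) (use hc e in auto)
qed

end
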